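(* Let $G=(V,E,d)$ be as in the context and suppose that $\alpha=\{1,\dots,k\}\subseteq V$ is a clique in $G$ (every pair $i<j$ in $\alpha$ satisfies $ij\in E$). Define $$\widehat\Omega:=\{X\in\mathcal{S}^n_{c,+}:\ \mathcal{K}(X)_{ij}=d_{ij}\ \text{ for all }1\le i<j\le k\},$$ and assume $\widehat\Omega\neq\emptyset$. Let $d_\alpha\in\mathcal{S}^k$ be the matrix with zero diagonal and $(d_\alpha)_{ij}=(d_\alpha)_{ji}=d_{ij}$ for $1\le i<j\le k$, and let $\mathcal{K}^\dagger d_\alpha:=-\tfrac12 J_k d_\alpha J_k$ where $J_k=I_k-\tfrac1k ee^T$ (this matrix lies in $\mathcal{S}^k_{c,+}$). Then for any matrix $\widehat Y\in\mathcal{S}^k$ exposing $\operatorname{face}(\mathcal{K}^\dagger d_\alpha;\mathcal{S}^k_{c,+})$, the $n\times n$ matrix $\begin{bmatrix}\widehat Y&0\\0&0\end{bmatrix}$ exposes $\operatorname{face}(\widehat\Omega;\mathcal{S}^n_{c,+})$.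
   Context: $G=(V,E,d)$: weighted undirected graph, $V=\{1,\dots,n\}$, $E\subseteq\{ij:1\le i<j\le n\}$, $d\in\mathbb{R}^E$ nonnegative. $\mathcal{S}^m$ is the space of real symmetric $m\times m$ matrices with trace inner product $\langle A,B\rangle=\operatorname{tr}(AB)$; $e$ is the all-ones vector of appropriate size. $\mathcal{K}:\mathcal{S}^n\to\mathcal{S}^n$ is defined by $\mathcal{K}(X)_{ij}=X_{ii}+X_{jj}-2X_{ij}$. $\mathcal{S}^m_{c,+}=\{X\in\mathcal{S}^m: X\succeq 0,\ Xe=0\}$ (centered PSD matrices). A face of $\mathcal{S}^m_{c,+}$ is a convex subset $F$ such that any line segment in $\mathcal{S}^m_{c,+}$ whose relative interior meets $F$ lies in $F$. For a convex set $\Omega\subseteq\mathcal{S}^m_{c,+}$ (or a single matrix), $\operatorname{face}(\Omega;\mathcal{S}^m_{c,+})$ is the smallest face of $\mathcal{S}^m_{c,+}$ containing $\Omega$. A matrix $Y$ exposes a face $F$ of $\mathcal{S}^m_{c,+}$ if $Y\succeq 0$, $Ye=0$, and $F=\{X\in\mathcal{S}^m_{c,+}:\langle X,Y\rangle=0\}$. *)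

theory Defs
  imports Complex_Main "Jordan_Normal_Form.Matrix"
begin

text \<open>Real m x m matrices are JNF matrices in carrier_mat m m; indices are 0,...,m-1.\<close>

definition mat_trace :: "real mat \<Rightarrow> real" where
  "mat_trace A = (\<Sum>i<dim_row A. A $$ (i, i))"

definition tr_inner :: "real mat \<Rightarrow> real mat \<Rightarrow> real" where
  "tr_inner A B = mat_trace (A * B)"

definition ones_vec :: "nat \<Rightarrow> real vec" where
  "ones_vec m = vec m (\<lambda>_. 1)"

definition sym_mats :: "nat \<Rightarrow> real mat set" where
  "sym_mats m = {X \<in> carrier_mat m m. transpose_mat X = X}"

definition psd :: "real mat \<Rightarrow> bool" where
  "psd X \<longleftrightarrow> (\<forall>v \<in> carrier_vec (dim_row X). 0 \<le> v \<bullet> (X *\<^sub>v v))"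

definition centered_psd :: "nat \<Rightarrow> real mat set" where
  "centered_psd m = {X \<in> sym_mats m. psd X \<and> X *\<^sub>v ones_vec m = 0\<^sub>v m}"

definition Kmap :: "real mat \<Rightarrow> real mat" where
  "Kmap X = mat (dim_row X) (dim_col X) (\<lambda>(i, j). X $$ (i, i) + X $$ (j, j) - 2 * X $$ (i, j))"

definition seg_pt :: "real \<Rightarrow> real mat \<Rightarrow> real mat \<Rightarrow> real mat" where
  "seg_pt t X Y = (1 - t) \<cdot>\<^sub>m X + t \<cdot>\<^sub>m Y"

definition convex_mats :: "real mat set \<Rightarrow> bool" where
  "convex_mats F \<longleftrightarrow> (\<forall>X\<in>F. \<forall>Y\<in>F. \<forall>t. 0 \<le> t \<and> t \<le> 1 \<longrightarrow> seg_pt t X Y \<in> F)"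

definition is_face :: "real mat set \<Rightarrow> real mat set \<Rightarrow> bool" where
  "is_face S F \<longleftrightarrow> F \<subseteq> S \<and> convex_mats F \<and>
     (\<forall>X\<in>S. \<forall>Y\<in>S. (\<exists>t. 0 < t \<and> t < 1 \<and> seg_pt t X Y \<in> F) \<longrightarrow>
        (\<forall>t. 0 \<le> t \<and> t \<le> 1 \<longrightarrow> seg_pt t X Y \<in> F))"

definition face_hull :: "real mat set \<Rightarrow> real mat set \<Rightarrow> real mat set" where
  "face_hull S \<Omega> = \<Inter> {F. is_face S F \<and> \<Omega> \<subseteq> F}"

definition exposes :: "nat \<Rightarrow> real mat \<Rightarrow> real mat set \<Rightarrow> bool" where
  "exposes m Y F \<longleftrightarrow> Y \<in> carrier_mat m m \<and> psd Y \<and> Y *\<^sub>v ones_vec m = 0\<^sub>v m \<and>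
     F = {X \<in> centered_psd m. tr_inner X Y = 0}"

definition Jmat :: "nat \<Rightarrow> real mat" where
  "Jmat k = 1\<^sub>m k - (1 / real k) \<cdot>\<^sub>m mat k k (\<lambda>_. 1)"

definition Kdag :: "nat \<Rightarrow> real mat \<Rightarrow> real mat" where
  "Kdag k D = (- 1 / 2) \<cdot>\<^sub>m (Jmat k * D * Jmat k)"

text \<open>d_alpha for the clique alpha = {0,...,k-1}: zero diagonal, (i,j) and (j,i) entries d(i,j) for i<j\<close>
definition d_alpha :: "nat \<Rightarrow> (nat \<times> nat \<Rightarrow> real) \<Rightarrow> real mat" where
  "d_alpha k d = mat k k (\<lambda>(i, j). if i < j then d (i, j) else if j < i then d (j, i) else 0)"

end

theory Submission
  imports Defs "HOL-Analysis.Convex"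
begin

(*
  Let alpha = {0,...,k-1} be the clique, Omega the set of centred PSD matrices X whose
  leading k x k block realises the distances d on alpha, D = K^dagger(d_alpha), and
  Yb = [Yhat 0; 0 0].

  (1) For every X in S^n_{c,+}, tr(X Yb) = tr(C(X) Yhat), where C(X) = J X_alpha J is the
      centred leading block; C maps S^n_{c,+} into S^k_{c,+}, and C(X) = D for X in Omega.
  (2) Since Yhat exposes face(D), tr(A Yhat) >= 0 on S^k_{c,+}; hence tr(. Yb) >= 0 on
      S^n_{c,+}, so F_Y = {X. tr(X Yb) = 0} is a face, and it contains Omega.  This gives
      face(Omega) <= F_Y.
  (3) Conversely, face(D) consists of matrices Loewner-dominated by a multiple of D, and a
      face of S^n_{c,+} contains every matrix dominated by one of its members.  If X is in
      F_Y, then C(X) is dominated by D = C(Z0) for some Z0 in Omega, and an explicit estimate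
      shows that X is dominated by Z0 + M, where M is the Gram matrix of the centred
      coordinates outside alpha.  As Z0 + M again lies in Omega, X lies in face(Omega).
*)

section \<open>Quadratic forms and the cone of centred PSD matrices\<close>

definition quad_form :: "nat \<Rightarrow> real mat \<Rightarrow> (nat \<Rightarrow> real) \<Rightarrow> real" where
  "quad_form m A f = (\<Sum>i<m. \<Sum>j<m. f i * A $$ (i, j) * f j)"

lemma quad_form_vec:
  assumes "A \<in> carrier_mat m m" "v \<in> carrier_vec m"
  shows "v \<bullet> (A *\<^sub>v v) = quad_form m A (\<lambda>i. v $ i)"
proof -
  have "v \<bullet> (A *\<^sub>v v) = (\<Sum>i<m. v $ i * (\<Sum>j<m. A $$ (i, j) * v $ j))"
    using assms by (auto simp: scalar_prod_def mult_mat_vec_def atLeast0LessThan intro!: sum.cong)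
  also have "\<dots> = quad_form m A (\<lambda>i. v $ i)"
    by (simp add: quad_form_def sum_distrib_left mult.assoc)
  finally show ?thesis .
qed

lemma psd_iff_quad_form:
  assumes "A \<in> carrier_mat m m"
  shows "psd A \<longleftrightarrow> (\<forall>f. 0 \<le> quad_form m A f)"
proof
  assume p: "psd A"
  show "\<forall>f. 0 \<le> quad_form m A f"
  proof
    fix f :: "nat \<Rightarrow> real"
    have "vec m f \<in> carrier_vec m" by simp
    then have "0 \<le> vec m f \<bullet> (A *\<^sub>v vec m f)" using p assms unfolding psd_def by auto
    also have "\<dots> = quad_form m A (\<lambda>i. vec m f $ i)" using quad_form_vec[OF assms] by simp
    also have "\<dots> = quad_form m A f" unfolding quad_form_def by (intro sum.cong) auto
    finally show "0 \<le> quad_form m A f" .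
  qed
next
  assume h: "\<forall>f. 0 \<le> quad_form m A f"
  show "psd A" unfolding psd_def
  proof
    fix v :: "real vec" assume "v \<in> carrier_vec (dim_row A)"
    then have v: "v \<in> carrier_vec m" using assms by simp
    show "0 \<le> v \<bullet> (A *\<^sub>v v)" unfolding quad_form_vec[OF assms v] using h by simp
  qed
qed

lemma centered_iff_row_sums:
  assumes "A \<in> carrier_mat m m"
  shows "A *\<^sub>v ones_vec m = 0\<^sub>v m \<longleftrightarrow> (\<forall>i<m. (\<Sum>j<m. A $$ (i, j)) = 0)"
proof -
  have "\<And>i. i < m \<Longrightarrow> (A *\<^sub>v ones_vec m) $ i = (\<Sum>j<m. A $$ (i, j))"
    using assms by (auto simp: scalar_prod_def mult_mat_vec_def ones_vec_def atLeast0LessThan intro!: sum.cong)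
  then show ?thesis using assms
    by (auto simp: vec_eq_iff ones_vec_def)
qed

lemma transpose_eq_iff:
  assumes "A \<in> carrier_mat m m"
  shows "transpose_mat A = A \<longleftrightarrow> (\<forall>i<m. \<forall>j<m. A $$ (j, i) = A $$ (i, j))"
  using assms by (auto simp: mat_eq_iff)

lemma centered_psd_iff:
  "A \<in> centered_psd m \<longleftrightarrow> A \<in> carrier_mat m m \<and> (\<forall>i<m. \<forall>j<m. A $$ (j, i) = A $$ (i, j))
     \<and> (\<forall>f. 0 \<le> quad_form m A f) \<and> (\<forall>i<m. (\<Sum>j<m. A $$ (i, j)) = 0)"
proof (cases "A \<in> carrier_mat m m")
  case True
  then show ?thesis unfolding centered_psd_def sym_mats_def
    using psd_iff_quad_form[OF True] centered_iff_row_sums[OF True] transpose_eq_iff[OF True] by simp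
qed (simp add: centered_psd_def sym_mats_def)

lemma quad_form_add: "A \<in> carrier_mat m m \<Longrightarrow> B \<in> carrier_mat m m \<Longrightarrow> quad_form m (A + B) f = quad_form m A f + quad_form m B f"
  unfolding quad_form_def by (simp add: sum.distrib[symmetric] algebra_simps)

lemma quad_form_diff: "A \<in> carrier_mat m m \<Longrightarrow> B \<in> carrier_mat m m \<Longrightarrow> quad_form m (A - B) f = quad_form m A f - quad_form m B f"
  unfolding quad_form_def by (simp add: sum_subtractf[symmetric] algebra_simps)

lemma quad_form_smult: "A \<in> carrier_mat m m \<Longrightarrow> quad_form m (c \<cdot>\<^sub>m A) f = c * quad_form m A f"
  unfolding quad_form_def by (simp add: sum_distrib_left algebra_simps)

lemma seg_pt_carrier: "A \<in> carrier_mat m m \<Longrightarrow> B \<in> carrier_mat m m \<Longrightarrow> seg_pt t A B \<in> carrier_mat m m"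
  unfolding seg_pt_def by simp

lemma seg_pt_index: "A \<in> carrier_mat m m \<Longrightarrow> B \<in> carrier_mat m m \<Longrightarrow> i < m \<Longrightarrow> j < m \<Longrightarrow>
   seg_pt t A B $$ (i, j) = (1 - t) * A $$ (i, j) + t * B $$ (i, j)"
  unfolding seg_pt_def by simp

lemma quad_form_seg_pt: "A \<in> carrier_mat m m \<Longrightarrow> B \<in> carrier_mat m m \<Longrightarrow>
   quad_form m (seg_pt t A B) f = (1 - t) * quad_form m A f + t * quad_form m B f"
  unfolding seg_pt_def by (simp add: quad_form_add quad_form_smult)

lemma centered_psd_nonneg_comb:
  assumes "A \<in> centered_psd m" "B \<in> centered_psd m" "0 \<le> a" "0 \<le> b"
  shows "a \<cdot>\<^sub>m A + b \<cdot>\<^sub>m B \<in> centered_psd m"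
proof -
  have A: "A \<in> carrier_mat m m" "\<forall>i<m. \<forall>j<m. A $$ (j, i) = A $$ (i, j)" "\<forall>f. 0 \<le> quad_form m A f"
     "\<forall>i<m. (\<Sum>j<m. A $$ (i, j)) = 0" using assms(1) centered_psd_iff by auto
  have B: "B \<in> carrier_mat m m" "\<forall>i<m. \<forall>j<m. B $$ (j, i) = B $$ (i, j)" "\<forall>f. 0 \<le> quad_form m B f"
     "\<forall>i<m. (\<Sum>j<m. B $$ (i, j)) = 0" using assms(2) centered_psd_iff by auto
  have c: "a \<cdot>\<^sub>m A + b \<cdot>\<^sub>m B \<in> carrier_mat m m" using A B by simp
  show ?thesis unfolding centered_psd_iff
  proof (intro conjI allI impI c)
    fix i j assume "i < m" "j < m"
    then show "(a \<cdot>\<^sub>m A + b \<cdot>\<^sub>m B) $$ (j, i) = (a \<cdot>\<^sub>m A + b \<cdot>\<^sub>m B) $$ (i, j)"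
      using A B by simp
  next
    fix f
    show "0 \<le> quad_form m (a \<cdot>\<^sub>m A + b \<cdot>\<^sub>m B) f"
      using A B assms(3,4) by (simp add: quad_form_add quad_form_smult)
  next
    fix i assume i: "i < m"
    have "(\<Sum>j<m. (a \<cdot>\<^sub>m A + b \<cdot>\<^sub>m B) $$ (i, j)) = a * (\<Sum>j<m. A $$ (i, j)) + b * (\<Sum>j<m. B $$ (i, j))"
      using A(1) B(1) i by (simp add: sum.distrib sum_distrib_left)
    then show "(\<Sum>j<m. (a \<cdot>\<^sub>m A + b \<cdot>\<^sub>m B) $$ (i, j)) = 0" using A(4) B(4) i by simp
  qed
qed

lemma centered_psd_seg_pt: "A \<in> centered_psd m \<Longrightarrow> B \<in> centered_psd m \<Longrightarrow> 0 \<le> t \<Longrightarrow> t \<le> 1 \<Longrightarrow>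
  seg_pt t A B \<in> centered_psd m"
  unfolding seg_pt_def by (rule centered_psd_nonneg_comb) auto

lemma centered_psd_carrier: "A \<in> centered_psd m \<Longrightarrow> A \<in> carrier_mat m m"
  using centered_psd_iff by auto

lemma centered_psd_smult: "A \<in> centered_psd m \<Longrightarrow> 0 \<le> c \<Longrightarrow> c \<cdot>\<^sub>m A \<in> centered_psd m"
proof -
  assume a: "A \<in> centered_psd m" "0 \<le> c"
  have "c \<cdot>\<^sub>m A + 0 \<cdot>\<^sub>m A \<in> centered_psd m" by (rule centered_psd_nonneg_comb) (use a in auto)
  moreover have "c \<cdot>\<^sub>m A + 0 \<cdot>\<^sub>m A = c \<cdot>\<^sub>m A" using centered_psd_carrier[OF a(1)]
    by (intro eq_matI) auto
  ultimately show ?thesis by simp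
qed

lemma centered_psd_add: "A \<in> centered_psd m \<Longrightarrow> B \<in> centered_psd m \<Longrightarrow> A + B \<in> centered_psd m"
proof -
  assume a: "A \<in> centered_psd m" "B \<in> centered_psd m"
  have "1 \<cdot>\<^sub>m A + 1 \<cdot>\<^sub>m B \<in> centered_psd m" by (rule centered_psd_nonneg_comb) (use a in auto)
  moreover have "1 \<cdot>\<^sub>m A + 1 \<cdot>\<^sub>m B = A + B" using centered_psd_carrier[OF a(1)] centered_psd_carrier[OF a(2)]
    by (intro eq_matI) auto
  ultimately show ?thesis by simp
qed

lemma convex_centered_psd: "convex_mats (centered_psd m)"
  unfolding convex_mats_def using centered_psd_seg_pt by blast

section \<open>Faces of the centred PSD cone\<close>

lemma is_face_self: "convex_mats S \<Longrightarrow> is_face S S"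
  unfolding is_face_def convex_mats_def by blast

lemma face_hull_is_face:
  assumes "convex_mats S" "\<Omega> \<subseteq> S"
  shows "is_face S (face_hull S \<Omega>)" "\<Omega> \<subseteq> face_hull S \<Omega>"
proof -
  let ?Fs = "{F. is_face S F \<and> \<Omega> \<subseteq> F}"
  have SF: "S \<in> ?Fs" using assms is_face_self by auto
  show "\<Omega> \<subseteq> face_hull S \<Omega>" unfolding face_hull_def by blast
  have sub: "face_hull S \<Omega> \<subseteq> S" unfolding face_hull_def using SF by blast
  have cv: "convex_mats (face_hull S \<Omega>)"
    unfolding convex_mats_def face_hull_def
  proof (intro ballI allI impI InterI)
    fix X Y F and t :: real assume X: "X \<in> \<Inter> ?Fs" and Y: "Y \<in> \<Inter> ?Fs" and t: "0 \<le> t \<and> t \<le> 1" and F: "F \<in> ?Fs"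
    then have "X \<in> F" "Y \<in> F" "convex_mats F" unfolding is_face_def by auto
    then show "seg_pt t X Y \<in> F" using t unfolding convex_mats_def by blast
  qed
  show "is_face S (face_hull S \<Omega>)"
    unfolding is_face_def
  proof (intro conjI sub cv ballI impI allI)
    fix X Y and t :: real assume X: "X \<in> S" and Y: "Y \<in> S" and ex: "\<exists>t. 0 < t \<and> t < 1 \<and> seg_pt t X Y \<in> face_hull S \<Omega>"
      and t: "0 \<le> t \<and> t \<le> 1"
    show "seg_pt t X Y \<in> face_hull S \<Omega>" unfolding face_hull_def
    proof (rule InterI)
      fix F assume F: "F \<in> ?Fs"
      from ex obtain t0 where "0 < t0" "t0 < 1" "seg_pt t0 X Y \<in> face_hull S \<Omega>" by blast
      then have "seg_pt t0 X Y \<in> F" using F unfolding face_hull_def by blast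
      then show "seg_pt t X Y \<in> F" using F X Y t \<open>0 < t0\<close> \<open>t0 < 1\<close> unfolding is_face_def by blast
    qed
  qed
qed

lemma face_hull_least: "is_face S F \<Longrightarrow> \<Omega> \<subseteq> F \<Longrightarrow> face_hull S \<Omega> \<subseteq> F"
  unfolding face_hull_def by blast

text \<open>Faces of a cone are cones: Z lies in the open segment from 0 to (c + 2) Z.\<close>
lemma face_scale:
  assumes F: "is_face (centered_psd m) F" and Z: "Z \<in> F" and c: "0 \<le> c"
  shows "c \<cdot>\<^sub>m Z \<in> F"
proof -
  have ZS: "Z \<in> centered_psd m" using F Z unfolding is_face_def by auto
  have Zc: "Z \<in> carrier_mat m m" using centered_psd_carrier[OF ZS] .
  define s where "s = c + 2"
  have s: "1 < s" using c unfolding s_def by simp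
  have ends: "0 \<cdot>\<^sub>m Z \<in> centered_psd m" "s \<cdot>\<^sub>m Z \<in> centered_psd m"
    using centered_psd_smult[OF ZS] s by auto
  have seg: "seg_pt t (0 \<cdot>\<^sub>m Z) (s \<cdot>\<^sub>m Z) = (t * s) \<cdot>\<^sub>m Z" for t
    unfolding seg_pt_def using Zc by (intro eq_matI) auto
  have "seg_pt (1 / s) (0 \<cdot>\<^sub>m Z) (s \<cdot>\<^sub>m Z) = Z"
    unfolding seg using Zc s by (intro eq_matI) auto
  then have inner: "\<exists>t. 0 < t \<and> t < 1 \<and> seg_pt t (0 \<cdot>\<^sub>m Z) (s \<cdot>\<^sub>m Z) \<in> F"
    using Z s by (intro exI[of _ "1 / s"]) auto
  have "0 \<le> c / s" "c / s \<le> 1" using c s unfolding s_def by auto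
  then have "seg_pt (c / s) (0 \<cdot>\<^sub>m Z) (s \<cdot>\<^sub>m Z) \<in> F"
    using F ends inner unfolding is_face_def by blast
  then show ?thesis unfolding seg using s by simp
qed

lemma face_summand:
  assumes F: "is_face (centered_psd m) F" and A: "A \<in> centered_psd m" and B: "B \<in> centered_psd m"
    and AB: "A + B \<in> F"
  shows "A \<in> F"
proof -
  have Ac: "A \<in> carrier_mat m m" and Bc: "B \<in> carrier_mat m m" using A B centered_psd_carrier by auto
  have S2: "2 \<cdot>\<^sub>m A \<in> centered_psd m" "2 \<cdot>\<^sub>m B \<in> centered_psd m" using centered_psd_smult A B by auto
  have "seg_pt (1/2) (2 \<cdot>\<^sub>m A) (2 \<cdot>\<^sub>m B) = A + B" unfolding seg_pt_def using Ac Bc by (intro eq_matI) auto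
  then have "\<exists>t. 0 < t \<and> t < 1 \<and> seg_pt t (2 \<cdot>\<^sub>m A) (2 \<cdot>\<^sub>m B) \<in> F"
    using AB by (intro exI[of _ "1/2"]) auto
  then have "seg_pt 0 (2 \<cdot>\<^sub>m A) (2 \<cdot>\<^sub>m B) \<in> F" using F S2 unfolding is_face_def by auto
  moreover have "seg_pt 0 (2 \<cdot>\<^sub>m A) (2 \<cdot>\<^sub>m B) = 2 \<cdot>\<^sub>m A" unfolding seg_pt_def using Ac Bc by (intro eq_matI) auto
  ultimately have "(1/2) \<cdot>\<^sub>m (2 \<cdot>\<^sub>m A) \<in> F" using face_scale[OF F] by auto
  moreover have "(1/2) \<cdot>\<^sub>m (2 \<cdot>\<^sub>m A) = A" using Ac by (intro eq_matI) auto
  ultimately show ?thesis by simp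
qed

definition dominated :: "nat \<Rightarrow> real mat \<Rightarrow> real mat \<Rightarrow> bool" where
  "dominated m A D \<longleftrightarrow> (\<exists>c\<ge>0. \<forall>w. quad_form m A w \<le> c * quad_form m D w)"

lemma face_dominated:
  assumes F: "is_face (centered_psd m) F" and Z: "Z \<in> F" and X: "X \<in> centered_psd m"
    and dom: "dominated m X Z"
  shows "X \<in> F"
proof -
  obtain K where K: "0 \<le> K" and le: "\<forall>f. quad_form m X f \<le> K * quad_form m Z f"
    using dom unfolding dominated_def by blast
  have ZS: "Z \<in> centered_psd m" using F Z unfolding is_face_def by auto
  have Zc: "Z \<in> carrier_mat m m" and Xc: "X \<in> carrier_mat m m" using ZS X centered_psd_carrier by auto
  have KZ: "K \<cdot>\<^sub>m Z \<in> F" using face_scale[OF F Z K] .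
  let ?W = "K \<cdot>\<^sub>m Z - X"
  have Wc: "?W \<in> carrier_mat m m" using Zc Xc by (simp add: minus_carrier_mat)
  have W: "?W \<in> centered_psd m" unfolding centered_psd_iff
  proof (intro conjI allI impI Wc)
    fix i j assume "i < m" "j < m"
    then show "?W $$ (j, i) = ?W $$ (i, j)" using Zc Xc ZS X centered_psd_iff by auto
  next
    fix f show "0 \<le> quad_form m ?W f" using le Zc Xc by (simp add: quad_form_diff quad_form_smult)
  next
    fix i assume i: "i < m"
    have "(\<Sum>j<m. ?W $$ (i, j)) = K * (\<Sum>j<m. Z $$ (i, j)) - (\<Sum>j<m. X $$ (i, j))"
      using Zc Xc i by (simp add: sum_subtractf sum_distrib_left)
    moreover have "(\<Sum>j<m. Z $$ (i, j)) = 0" "(\<Sum>j<m. X $$ (i, j)) = 0"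
      using ZS X i unfolding centered_psd_iff by blast+
    ultimately show "(\<Sum>j<m. ?W $$ (i, j)) = 0" by simp
  qed
  have "X + ?W = K \<cdot>\<^sub>m Z" using Zc Xc by (intro eq_matI) auto
  then show ?thesis using face_summand[OF F X W] KZ by simp
qed

lemma dominated_seg_pt:
  assumes A: "A \<in> carrier_mat m m" and B: "B \<in> carrier_mat m m"
    and D: "\<forall>w. 0 \<le> quad_form m D w" and t: "0 \<le> t" "t \<le> 1"
    and dA: "dominated m A D" and dB: "dominated m B D"
  shows "dominated m (seg_pt t A B) D"
proof -
  obtain a where a: "0 \<le> a" "\<forall>w. quad_form m A w \<le> a * quad_form m D w"
    using dA unfolding dominated_def by blast
  obtain b where b: "0 \<le> b" "\<forall>w. quad_form m B w \<le> b * quad_form m D w"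
    using dB unfolding dominated_def by blast
  have "quad_form m (seg_pt t A B) w \<le> (a + b) * quad_form m D w" for w
  proof -
    have "(1 - t) * quad_form m A w \<le> (1 - t) * (a * quad_form m D w)"
      using a t by (intro mult_left_mono) auto
    also have "\<dots> \<le> a * quad_form m D w" using t a D by (simp add: mult_left_le_one_le)
    finally have 1: "(1 - t) * quad_form m A w \<le> a * quad_form m D w" .
    have "t * quad_form m B w \<le> t * (b * quad_form m D w)" using b t by (intro mult_left_mono) auto
    also have "\<dots> \<le> b * quad_form m D w" using t b D by (simp add: mult_left_le_one_le)
    finally have 2: "t * quad_form m B w \<le> b * quad_form m D w" .
    show ?thesis using 1 2 quad_form_seg_pt[OF A B, of t w] by (simp add: algebra_simps)
  qed
  then show ?thesis unfolding dominated_def using a b by (intro exI[of _ "a + b"]) auto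
qed

lemma dominated_seg_pt_ends:
  assumes A: "A \<in> centered_psd m" and B: "B \<in> centered_psd m" and t: "0 < t" "t < 1"
    and dom: "dominated m (seg_pt t A B) D"
  shows "dominated m A D" "dominated m B D"
proof -
  obtain c where c: "0 \<le> c" and hc: "\<forall>w. quad_form m (seg_pt t A B) w \<le> c * quad_form m D w"
    using dom unfolding dominated_def by blast
  have Ap: "\<forall>w. 0 \<le> quad_form m A w" and Bp: "\<forall>w. 0 \<le> quad_form m B w"
    using A B centered_psd_iff by auto
  have split: "(1 - t) * quad_form m A w + t * quad_form m B w \<le> c * quad_form m D w" for w
    using hc quad_form_seg_pt[OF centered_psd_carrier[OF A] centered_psd_carrier[OF B]] by metis
  have "quad_form m A w \<le> (c / (1 - t)) * quad_form m D w" for w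
  proof -
    have "0 \<le> t * quad_form m B w" using Bp t by simp
    then have "(1 - t) * quad_form m A w \<le> c * quad_form m D w" using split[of w] by linarith
    then show ?thesis using t by (simp add: field_simps)
  qed
  then show "dominated m A D" unfolding dominated_def using c t by (intro exI[of _ "c / (1 - t)"]) auto
  have "quad_form m B w \<le> (c / t) * quad_form m D w" for w
  proof -
    have "0 \<le> (1 - t) * quad_form m A w" using Ap t by simp
    then have "t * quad_form m B w \<le> c * quad_form m D w" using split[of w] by linarith
    then show ?thesis using t by (simp add: field_simps)
  qed
  then show "dominated m B D" unfolding dominated_def using c t by (intro exI[of _ "c / t"]) auto
qed

lemma dominated_face:
  assumes D: "D \<in> centered_psd m"
  shows "is_face (centered_psd m) {A \<in> centered_psd m. dominated m A D}" (is "is_face _ ?G")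
proof -
  have Dp: "\<forall>w. 0 \<le> quad_form m D w" using D centered_psd_iff by auto
  have seg: "seg_pt t A B \<in> ?G"
    if A: "A \<in> centered_psd m" and B: "B \<in> centered_psd m" and t: "0 \<le> t" "t \<le> 1"
      and dA: "dominated m A D" and dB: "dominated m B D" for A B t
    using centered_psd_seg_pt[OF A B t]
      dominated_seg_pt[OF centered_psd_carrier[OF A] centered_psd_carrier[OF B] Dp t dA dB] by simp
  show ?thesis unfolding is_face_def convex_mats_def
  proof (intro conjI ballI impI allI)
    show "?G \<subseteq> centered_psd m" by blast
    fix A B and t :: real assume A: "A \<in> centered_psd m" and B: "B \<in> centered_psd m"
      and inner: "\<exists>t. 0 < t \<and> t < 1 \<and> seg_pt t A B \<in> ?G" and t: "0 \<le> t \<and> t \<le> 1"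
    obtain t0 where "0 < t0" "t0 < 1" "dominated m (seg_pt t0 A B) D" using inner by blast
    then show "seg_pt t A B \<in> ?G"
      using seg[OF A B] dominated_seg_pt_ends[OF A B] t by blast
  qed (use seg in blast)
qed

lemma face_hull_dominated:
  assumes D: "D \<in> centered_psd m" and A: "A \<in> face_hull (centered_psd m) {D}"
  shows "dominated m A D"
proof -
  have "dominated m D D" unfolding dominated_def by (intro exI[of _ 1]) auto
  then have "face_hull (centered_psd m) {D} \<subseteq> {A \<in> centered_psd m. dominated m A D}"
    using D by (intro face_hull_least dominated_face) auto
  then show ?thesis using A by blast
qed

section \<open>The trace inner product and exposed faces\<close>

lemma index_mult_sum: "A \<in> carrier_mat a b \<Longrightarrow> B \<in> carrier_mat b c \<Longrightarrow> i < a \<Longrightarrow> j < c \<Longrightarrow>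
  (A * B) $$ (i, j) = (\<Sum>l<b. A $$ (i, l) * B $$ (l, j))"
  by (simp add: scalar_prod_def atLeast0LessThan)

lemma tr_inner_entries: "A \<in> carrier_mat m m \<Longrightarrow> B \<in> carrier_mat m m \<Longrightarrow>
  tr_inner A B = (\<Sum>i<m. \<Sum>j<m. A $$ (i, j) * B $$ (j, i))"
  unfolding tr_inner_def mat_trace_def by (auto intro!: sum.cong simp: scalar_prod_def atLeast0LessThan)

lemma tr_inner_seg_pt: "A \<in> carrier_mat m m \<Longrightarrow> B \<in> carrier_mat m m \<Longrightarrow> Y \<in> carrier_mat m m \<Longrightarrow>
  tr_inner (seg_pt t A B) Y = (1 - t) * tr_inner A Y + t * tr_inner B Y"
proof -
  assume a: "A \<in> carrier_mat m m" "B \<in> carrier_mat m m" "Y \<in> carrier_mat m m"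
  have "tr_inner (seg_pt t A B) Y = (\<Sum>i<m. \<Sum>j<m. (1-t) * (A$$(i,j) * Y$$(j,i)) + t * (B$$(i,j)*Y$$(j,i)))"
    unfolding tr_inner_entries[OF seg_pt_carrier[OF a(1,2)] a(3)]
    by (intro sum.cong refl) (simp add: seg_pt_index[OF a(1,2)] distrib_right)
  also have "\<dots> = (1 - t) * tr_inner A Y + t * tr_inner B Y"
    using a by (simp add: tr_inner_entries sum.distrib sum_distrib_left)
  finally show ?thesis .
qed

text \<open>For symmetric Y, tr(Y Y) is the squared Frobenius norm; it is positive as soon as some
  tr(A Y) is nonzero.\<close>
lemma tr_inner_self_pos:
  assumes Yc: "Y \<in> carrier_mat k k" and Ys: "\<forall>i<k. \<forall>j<k. Y $$ (j, i) = Y $$ (i, j)"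
    and Ac: "A \<in> carrier_mat k k" and AY: "tr_inner A Y \<noteq> 0"
  shows "0 < tr_inner Y Y"
proof -
  have sq: "tr_inner Y Y = (\<Sum>i<k. \<Sum>j<k. (Y $$ (i, j))^2)"
    unfolding tr_inner_entries[OF Yc Yc] using Ys by (intro sum.cong refl) (auto simp: power2_eq_square)
  have "\<not> (\<forall>i<k. \<forall>j<k. Y $$ (i, j) = 0)"
  proof
    assume "\<forall>i<k. \<forall>j<k. Y $$ (i, j) = 0"
    then have "tr_inner A Y = 0" unfolding tr_inner_entries[OF Ac Yc] by simp
    then show False using AY by simp
  qed
  then obtain i j where "i < k" "j < k" "Y $$ (i, j) \<noteq> 0" by blast
  then have "0 < (\<Sum>j<k. (Y $$ (i, j))^2)" by (intro sum_pos2[of _ j]) auto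
  then show ?thesis unfolding sq using \<open>i < k\<close>
    by (intro sum_pos2[where f = "\<lambda>i. \<Sum>j<k. (Y $$ (i, j))^2" and i = i]) (auto intro: sum_nonneg)
qed

text \<open>If the zero set of tr(. Y) is a face of S^m_{c,+}, then tr(. Y) is nonnegative on the
  cone: otherwise a segment from a negative point to Y would cross that face in its
  relative interior.\<close>
lemma tr_inner_nonneg_if_face:
  assumes Y: "Y \<in> centered_psd k"
    and H: "is_face (centered_psd k) {A \<in> centered_psd k. tr_inner A Y = 0}" (is "is_face _ ?Z")
    and A: "A \<in> centered_psd k"
  shows "0 \<le> tr_inner A Y"
proof (rule ccontr)
  assume neg: "\<not> 0 \<le> tr_inner A Y"
  have Yc: "Y \<in> carrier_mat k k" and Ys: "\<forall>i<k. \<forall>j<k. Y $$ (j, i) = Y $$ (i, j)"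
    using Y centered_psd_iff by auto
  have Ac: "A \<in> carrier_mat k k" using A centered_psd_carrier by auto
  define a where "a = tr_inner A Y"
  define b where "b = tr_inner Y Y"
  have a: "a < 0" and b: "0 < b" using neg tr_inner_self_pos[OF Yc Ys Ac] unfolding a_def b_def by force+
  define t where "t = - a / (b - a)"
  have t: "0 < t" "t < 1" using a b unfolding t_def by (auto simp: field_simps)
  have "tr_inner (seg_pt t A Y) Y = a + t * (b - a)"
    using tr_inner_seg_pt[OF Ac Yc Yc, of t] unfolding a_def b_def by (simp add: algebra_simps)
  also have "\<dots> = 0" using a b unfolding t_def by simp
  finally have "seg_pt t A Y \<in> ?Z" using centered_psd_seg_pt[OF A Y] t by auto
  then have inner: "\<exists>t. 0 < t \<and> t < 1 \<and> seg_pt t A Y \<in> ?Z" using t by blast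
  have face_rule: "\<forall>X\<in>centered_psd k. \<forall>Z\<in>centered_psd k. (\<exists>t. 0 < t \<and> t < 1 \<and> seg_pt t X Z \<in> ?Z)
      \<longrightarrow> (\<forall>t. 0 \<le> t \<and> t \<le> 1 \<longrightarrow> seg_pt t X Z \<in> ?Z)"
    using H unfolding is_face_def by (elim conjE)
  have "seg_pt 0 A Y \<in> ?Z" using face_rule[rule_format, OF A Y inner, of 0] by simp
  moreover have "seg_pt 0 A Y = A" unfolding seg_pt_def using Ac Yc by (intro eq_matI) auto
  ultimately show False using neg by simp
qed

lemma exposed_set_is_face:
  assumes Y: "Y \<in> carrier_mat m m" and nonneg: "\<And>X. X \<in> centered_psd m \<Longrightarrow> 0 \<le> tr_inner X Y"
  shows "is_face (centered_psd m) {X \<in> centered_psd m. tr_inner X Y = 0}" (is "is_face _ ?E")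
proof -
  have tr_seg: "tr_inner (seg_pt t A B) Y = (1 - t) * tr_inner A Y + t * tr_inner B Y"
    if "A \<in> centered_psd m" "B \<in> centered_psd m" for A B t
    using tr_inner_seg_pt[OF _ _ Y] centered_psd_carrier that by blast
  have seg: "seg_pt t A B \<in> ?E"
    if A: "A \<in> centered_psd m" and B: "B \<in> centered_psd m" and t: "0 \<le> t" "t \<le> 1"
      and zero: "tr_inner A Y = 0" "tr_inner B Y = 0" for A B t
    using centered_psd_seg_pt[OF A B t] tr_seg[OF A B, of t] zero by simp
  show ?thesis unfolding is_face_def convex_mats_def
  proof (intro conjI ballI impI allI)
    show "?E \<subseteq> centered_psd m" by blast
    fix A B and t :: real assume A: "A \<in> centered_psd m" and B: "B \<in> centered_psd m"
      and inner: "\<exists>t. 0 < t \<and> t < 1 \<and> seg_pt t A B \<in> ?E" and t: "0 \<le> t \<and> t \<le> 1"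
    obtain t0 where t0: "0 < t0" "t0 < 1" and zero: "tr_inner (seg_pt t0 A B) Y = 0"
      using inner by blast
    have "0 \<le> (1 - t0) * tr_inner A Y" "0 \<le> t0 * tr_inner B Y"
      using nonneg[OF A] nonneg[OF B] t0 by simp_all
    then have "(1 - t0) * tr_inner A Y = 0 \<and> t0 * tr_inner B Y = 0"
      using zero tr_seg[OF A B, of t0] by linarith
    then show "seg_pt t A B \<in> ?E" using seg[OF A B] t t0 by simp
  qed (use seg in blast)
qed

section \<open>The centred leading block\<close>

text \<open>C(X) = J_k X_alpha J_k written entrywise, and the padding of a k-vector w to the
  n-vector (J_k w, 0); the two are adjoint for the quadratic forms.\<close>
definition lead_center :: "nat \<Rightarrow> real mat \<Rightarrow> real mat" where
  "lead_center k X = mat k k (\<lambda>(i, j). X $$ (i, j) - (\<Sum>l<k. X $$ (l, j)) / k - (\<Sum>l<k. X $$ (i, l)) / k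
      + (\<Sum>l<k. \<Sum>l'<k. X $$ (l, l')) / (k * k))"

definition center_pad :: "nat \<Rightarrow> (nat \<Rightarrow> real) \<Rightarrow> nat \<Rightarrow> real" where
  "center_pad k w = (\<lambda>i. if i < k then w i - (\<Sum>l<k. w l) / k else 0)"

lemma quad_form_restrict:
  assumes "k \<le> n" "\<And>i. k \<le> i \<Longrightarrow> f i = 0"
  shows "quad_form n A f = quad_form k A f"
proof -
  have "quad_form n A f = (\<Sum>i<k. \<Sum>j<n. f i * A $$ (i, j) * f j)"
    unfolding quad_form_def using assms by (intro sum.mono_neutral_right) auto
  also have "\<dots> = quad_form k A f"
    unfolding quad_form_def using assms by (intro sum.cong refl sum.mono_neutral_right) auto
  finally show ?thesis .
qed

lemma lead_center_carrier: "lead_center k X \<in> carrier_mat k k" unfolding lead_center_def by simp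

lemma lead_center_index: "i < k \<Longrightarrow> j < k \<Longrightarrow> lead_center k X $$ (i, j) = X $$ (i, j) - (\<Sum>l<k. X $$ (l, j)) / k - (\<Sum>l<k. X $$ (i, l)) / k
      + (\<Sum>l<k. \<Sum>l'<k. X $$ (l, l')) / (k * k)"
  unfolding lead_center_def by simp

lemma quad_form_lead_center:
  assumes "k \<le> n"
  shows "quad_form k (lead_center k X) w = quad_form n X (center_pad k w)"
proof -
  define a where "a = (\<Sum>l<k. w l) / k"
  define C where "C j = (\<Sum>l<k. X $$ (l, j))" for j
  define R where "R i = (\<Sum>l<k. X $$ (i, l))" for i
  define T where "T = (\<Sum>l<k. \<Sum>l'<k. X $$ (l, l'))"
  have "quad_form n X (center_pad k w) = quad_form k X (center_pad k w)" by (rule quad_form_restrict) (use assms in \<open>auto simp: center_pad_def\<close>)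
  also have "\<dots> = (\<Sum>i<k. \<Sum>j<k. (w i - a) * X $$ (i, j) * (w j - a))"
    unfolding quad_form_def center_pad_def a_def by simp
  also have "\<dots> = (\<Sum>i<k. \<Sum>j<k. w i * X $$ (i, j) * w j) - a * (\<Sum>i<k. \<Sum>j<k. X $$ (i, j) * w j)
      - a * (\<Sum>i<k. \<Sum>j<k. w i * X $$ (i, j)) + a * a * (\<Sum>i<k. \<Sum>j<k. X $$ (i, j))"
    by (simp add: algebra_simps sum.distrib sum_subtractf sum_distrib_left)
  also have "(\<Sum>i<k. \<Sum>j<k. X $$ (i, j) * w j) = (\<Sum>j<k. C j * w j)"
    unfolding C_def by (subst sum.swap) (simp add: sum_distrib_right)
  also have "(\<Sum>i<k. \<Sum>j<k. w i * X $$ (i, j)) = (\<Sum>i<k. w i * R i)"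
    unfolding R_def by (simp add: sum_distrib_left)
  finally have rhs: "quad_form n X (center_pad k w) = (\<Sum>i<k. \<Sum>j<k. w i * X $$ (i, j) * w j) - a * (\<Sum>j<k. C j * w j)
      - a * (\<Sum>i<k. w i * R i) + a * a * T" unfolding T_def .
  have "quad_form k (lead_center k X) w = (\<Sum>i<k. \<Sum>j<k. w i * (X $$ (i, j) - C j / k - R i / k + T / (k * k)) * w j)"
    unfolding quad_form_def C_def R_def T_def by (intro sum.cong refl) (simp add: lead_center_index)
  also have "\<dots> = (\<Sum>i<k. \<Sum>j<k. w i * X $$ (i, j) * w j) - (\<Sum>i<k. \<Sum>j<k. w i * (C j / k) * w j)
     - (\<Sum>i<k. \<Sum>j<k. w i * (R i / k) * w j) + (\<Sum>i<k. \<Sum>j<k. w i * (T / (k * k)) * w j)"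
    by (simp add: algebra_simps sum.distrib sum_subtractf)
  also have "(\<Sum>i<k. \<Sum>j<k. w i * (C j / k) * w j) = a * (\<Sum>j<k. C j * w j)"
    unfolding a_def by (simp add: sum_distrib_left sum_distrib_right sum_divide_distrib algebra_simps)
  also have "(\<Sum>i<k. \<Sum>j<k. w i * (R i / k) * w j) = (\<Sum>i<k. w i * R i * a)"
    unfolding a_def by (intro sum.cong refl) (simp add: sum_distrib_left sum_divide_distrib algebra_simps)
  also have "\<dots> = a * (\<Sum>i<k. w i * R i)"
    by (simp add: sum_distrib_left algebra_simps)
  also have "(\<Sum>i<k. \<Sum>j<k. w i * (T / (k * k)) * w j) = a * a * T"
    unfolding a_def by (simp add: sum_distrib_left sum_distrib_right sum_divide_distrib algebra_simps)
  finally show ?thesis using rhs by simp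
qed

lemma lead_center_centered_psd:
  assumes X: "X \<in> centered_psd n" and kn: "k \<le> n"
  shows "lead_center k X \<in> centered_psd k"
proof -
  have Xc: "X \<in> carrier_mat n n" and Xs: "\<forall>i<n. \<forall>j<n. X $$ (j, i) = X $$ (i, j)"
    and Xp: "\<forall>f. 0 \<le> quad_form n X f" using X centered_psd_iff by auto
  show ?thesis unfolding centered_psd_iff
  proof (intro conjI allI impI lead_center_carrier)
    fix i j assume i: "i < k" and j: "j < k"
    have "(\<Sum>l<k. X $$ (l, i)) = (\<Sum>l<k. X $$ (i, l))" using Xs i kn by (intro sum.cong refl) auto
    moreover have "(\<Sum>l<k. X $$ (j, l)) = (\<Sum>l<k. X $$ (l, j))" using Xs j kn by (intro sum.cong refl) auto
    moreover have "X $$ (j, i) = X $$ (i, j)" using Xs i j kn by auto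
    ultimately show "lead_center k X $$ (j, i) = lead_center k X $$ (i, j)" using i j by (simp add: lead_center_index)
  next
    fix w show "0 \<le> quad_form k (lead_center k X) w" using quad_form_lead_center[OF kn] Xp by simp
  next
    fix i assume i: "i < k"
    then have kpos: "0 < real k" by simp
    have "(\<Sum>j<k. lead_center k X $$ (i, j)) = (\<Sum>j<k. X $$ (i, j)) - (\<Sum>j<k. \<Sum>l<k. X $$ (l, j)) / k
       - k * ((\<Sum>l<k. X $$ (i, l)) / k) + k * ((\<Sum>l<k. \<Sum>l'<k. X $$ (l, l')) / (k * k))"
      using i by (simp add: lead_center_index sum.distrib sum_subtractf sum_divide_distrib)
    also have "(\<Sum>j<k. \<Sum>l<k. X $$ (l, j)) = (\<Sum>l<k. \<Sum>l'<k. X $$ (l, l'))" by (rule sum.swap)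
    finally show "(\<Sum>j<k. lead_center k X $$ (i, j)) = 0" using kpos by (simp add: field_simps)
  qed
qed

section \<open>Zero padding of a k x k matrix\<close>

definition zero_pad :: "nat \<Rightarrow> nat \<Rightarrow> real mat \<Rightarrow> real mat" where
  "zero_pad k n Y = four_block_mat Y (0\<^sub>m k (n - k)) (0\<^sub>m (n - k) k) (0\<^sub>m (n - k) (n - k))"

lemma zero_pad_index:
  assumes "Y \<in> carrier_mat k k" "k \<le> n" "i < n" "j < n"
  shows "zero_pad k n Y $$ (i, j)
     = (if i < k \<and> j < k then Y $$ (i, j) else 0)"
  using assms by (simp add: index_mat_four_block zero_pad_def)

lemma zero_pad_carrier:
  assumes "Y \<in> carrier_mat k k" "k \<le> n"
  shows "zero_pad k n Y \<in> carrier_mat n n"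
  using assms by (auto simp: zero_pad_def)

lemma quad_form_zero_pad:
  assumes Yc: "Y \<in> carrier_mat k k" and kn: "k \<le> n"
  shows "quad_form n (zero_pad k n Y) f = quad_form k Y f"
proof -
  have "quad_form n (zero_pad k n Y) f
      = (\<Sum>i<n. \<Sum>j<n. f i * (if i < k \<and> j < k then Y $$ (i, j) else 0) * f j)"
    unfolding quad_form_def by (intro sum.cong refl) (simp add: zero_pad_index[OF Yc kn])
  also have "\<dots> = (\<Sum>i<k. \<Sum>j<n. f i * (if i < k \<and> j < k then Y $$ (i, j) else 0) * f j)"
    using kn by (intro sum.mono_neutral_right) auto
  also have "\<dots> = quad_form k Y f"
    unfolding quad_form_def using kn by (intro sum.cong refl sum.mono_neutral_cong_right) auto
  finally show ?thesis .
qed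

lemma zero_pad_row_sums:
  assumes Yc: "Y \<in> carrier_mat k k" and kn: "k \<le> n" and Yr: "\<forall>i<k. (\<Sum>j<k. Y $$ (i, j)) = 0" and i: "i < n"
  shows "(\<Sum>j<n. zero_pad k n Y $$ (i, j)) = 0"
proof -
  have "(\<Sum>j<n. zero_pad k n Y $$ (i, j))
      = (\<Sum>j<n. (if i < k \<and> j < k then Y $$ (i, j) else 0))"
    using i by (intro sum.cong refl) (simp add: zero_pad_index[OF Yc kn])
  also have "\<dots> = (\<Sum>j<k. (if i < k \<and> j < k then Y $$ (i, j) else 0))"
    using kn by (intro sum.mono_neutral_right) auto
  also have "\<dots> = 0" using Yr by (cases "i < k") auto
  finally show ?thesis .
qed

lemma zero_pad_centered_psd:
  assumes Y: "Y \<in> centered_psd k" and kn: "k \<le> n"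
  shows "zero_pad k n Y \<in> centered_psd n"
proof -
  have Yc: "Y \<in> carrier_mat k k" and Ys: "\<forall>i<k. \<forall>j<k. Y $$ (j, i) = Y $$ (i, j)"
    and Yp: "\<forall>f. 0 \<le> quad_form k Y f" and Yr: "\<forall>i<k. (\<Sum>j<k. Y $$ (i, j)) = 0"
    using Y centered_psd_iff by auto
  show ?thesis unfolding centered_psd_iff
  proof (intro conjI allI impI zero_pad_carrier[OF Yc kn])
    fix i j assume "i < n" "j < n"
    then show "zero_pad k n Y $$ (j, i) = zero_pad k n Y $$ (i, j)"
      using Ys by (simp add: zero_pad_index[OF Yc kn])
  next
    show "0 \<le> quad_form n (zero_pad k n Y) f" for f
      using Yp by (simp add: quad_form_zero_pad[OF Yc kn])
  qed (rule zero_pad_row_sums[OF Yc kn Yr])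
qed

text \<open>Observation (1): testing against the padded matrix only sees the centred leading block,
  because Y has zero row and column sums.\<close>
lemma tr_inner_zero_pad:
  assumes Yc: "Y \<in> carrier_mat k k" and kn: "k \<le> n" and Xc: "X \<in> carrier_mat n n"
    and Ys: "\<forall>i<k. \<forall>j<k. Y $$ (j, i) = Y $$ (i, j)" and Yr: "\<forall>i<k. (\<Sum>j<k. Y $$ (i, j)) = 0"
  shows "tr_inner X (zero_pad k n Y)
     = tr_inner (lead_center k X) Y"
proof -
  let ?Y = "zero_pad k n Y"
  have "tr_inner X ?Y = (\<Sum>i<n. \<Sum>j<n. X $$ (i, j) * (if j < k \<and> i < k then Y $$ (j, i) else 0))"
    unfolding tr_inner_entries[OF Xc zero_pad_carrier[OF Yc kn]] using Yc kn by (intro sum.cong refl) (simp add: zero_pad_index)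
  also have "\<dots> = (\<Sum>i<k. \<Sum>j<n. X $$ (i, j) * (if j < k \<and> i < k then Y $$ (j, i) else 0))"
    using kn by (intro sum.mono_neutral_right) auto
  also have "\<dots> = (\<Sum>i<k. \<Sum>j<k. X $$ (i, j) * Y $$ (j, i))"
    using kn by (intro sum.cong refl sum.mono_neutral_cong_right) auto
  finally have l: "tr_inner X ?Y = (\<Sum>i<k. \<Sum>j<k. X $$ (i, j) * Y $$ (j, i))" .
  define C where "C j = (\<Sum>l<k. X $$ (l, j))" for j
  define R where "R i = (\<Sum>l<k. X $$ (i, l))" for i
  define T where "T = (\<Sum>l<k. \<Sum>l'<k. X $$ (l, l'))"
  have cs: "(\<Sum>i<k. Y $$ (j, i)) = 0" if "j < k" for j using Yr that by auto
  have rs: "(\<Sum>j<k. Y $$ (j, i)) = 0" if "i < k" for i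
  proof -
    have "(\<Sum>j<k. Y $$ (j, i)) = (\<Sum>j<k. Y $$ (i, j))" using Ys that by (intro sum.cong refl) auto
    then show ?thesis using Yr that by simp
  qed
  have "tr_inner (lead_center k X) Y = (\<Sum>i<k. \<Sum>j<k. (X $$ (i, j) - C j / k - R i / k + T / (k * k)) * Y $$ (j, i))"
    unfolding tr_inner_entries[OF lead_center_carrier Yc] C_def R_def T_def by (intro sum.cong refl) (simp add: lead_center_index)
  also have "\<dots> = (\<Sum>i<k. \<Sum>j<k. X $$ (i, j) * Y $$ (j, i)) - (\<Sum>i<k. \<Sum>j<k. C j / k * Y $$ (j, i))
     - (\<Sum>i<k. \<Sum>j<k. R i / k * Y $$ (j, i)) + (\<Sum>i<k. \<Sum>j<k. T / (k * k) * Y $$ (j, i))"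
    by (simp add: algebra_simps sum.distrib sum_subtractf)
  also have "(\<Sum>i<k. \<Sum>j<k. C j / k * Y $$ (j, i)) = (\<Sum>j<k. C j / k * (\<Sum>i<k. Y $$ (j, i)))"
    by (subst sum.swap) (simp add: sum_distrib_left)
  also have "\<dots> = 0" using cs by simp
  also have "(\<Sum>i<k. \<Sum>j<k. R i / k * Y $$ (j, i)) = (\<Sum>i<k. R i / k * (\<Sum>j<k. Y $$ (j, i)))"
    by (simp add: sum_distrib_left)
  also have "\<dots> = 0" using rs by simp
  also have "(\<Sum>i<k. \<Sum>j<k. T / (k * k) * Y $$ (j, i)) = (\<Sum>i<k. T / (k * k) * (\<Sum>j<k. Y $$ (j, i)))"
    by (simp add: sum_distrib_left)
  also have "\<dots> = 0" using rs by simp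
  finally show ?thesis using l by simp
qed

section \<open>The map K and its pseudo-inverse on the clique\<close>

lemma Kmap_index: "X \<in> carrier_mat n n \<Longrightarrow> i < n \<Longrightarrow> j < n \<Longrightarrow> Kmap X $$ (i, j) = X $$ (i, i) + X $$ (j, j) - 2 * X $$ (i, j)"
  unfolding Kmap_def by simp

lemma Kmap_add: "A \<in> carrier_mat n n \<Longrightarrow> B \<in> carrier_mat n n \<Longrightarrow> i < n \<Longrightarrow> j < n \<Longrightarrow>
  Kmap (A + B) $$ (i, j) = Kmap A $$ (i, j) + Kmap B $$ (i, j)"
proof -
  assume A: "A \<in> carrier_mat n n" and B: "B \<in> carrier_mat n n" and i: "i < n" and j: "j < n"
  have c: "A + B \<in> carrier_mat n n" using A B by simp
  show ?thesis unfolding Kmap_index[OF c i j] Kmap_index[OF A i j] Kmap_index[OF B i j]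
    using A B i j by simp
qed

lemma Jmat_index: "i < k \<Longrightarrow> j < k \<Longrightarrow> Jmat k $$ (i, j) = (if i = j then 1 else 0) - 1 / k"
  unfolding Jmat_def by simp

lemma Jmat_carrier: "Jmat k \<in> carrier_mat k k" unfolding Jmat_def by (rule minus_carrier_mat) simp

lemma sum_indicator_left: "i < (k::nat) \<Longrightarrow> (\<Sum>l<k. (if i = l then 1 else 0) * f l) = (f i :: real)"
proof -
  assume i: "i < k"
  have "(\<Sum>l<k. (if i = l then 1 else 0) * f l) = (\<Sum>l<k. if i = l then f i else 0)" by (rule sum.cong) auto
  also have "\<dots> = f i" using i sum.delta'[of "{..<k}" i "\<lambda>_. f i"] by simp
  finally show ?thesis .
qed

lemma sum_indicator_right: "j < (k::nat) \<Longrightarrow> (\<Sum>l<k. f l * (if l = j then 1 else 0)) = (f j :: real)"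
proof -
  assume j: "j < k"
  have "(\<Sum>l<k. f l * (if l = j then 1 else 0)) = (\<Sum>l<k. if j = l then f j else 0)" by (rule sum.cong) auto
  also have "\<dots> = f j" using j sum.delta'[of "{..<k}" j "\<lambda>_. f j"] by simp
  finally show ?thesis .
qed

lemma Jmat_conj_index:
  assumes A: "A \<in> carrier_mat k k" and i: "i < k" and j: "j < k"
  shows "(Jmat k * A * Jmat k) $$ (i, j) = A $$ (i, j) - (\<Sum>l<k. A $$ (l, j)) / k - (\<Sum>l<k. A $$ (i, l)) / k
      + (\<Sum>l<k. \<Sum>l'<k. A $$ (l, l')) / (k * k)"
proof -
  have JA: "(Jmat k * A) $$ (i', j') = A $$ (i', j') - (\<Sum>l<k. A $$ (l, j')) / k" if "i' < k" "j' < k" for i' j'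
  proof -
    have "(Jmat k * A) $$ (i', j') = (\<Sum>l<k. ((if i' = l then 1 else 0) - 1 / k) * A $$ (l, j'))"
      using that A by (simp add: index_mult_sum[OF Jmat_carrier A] Jmat_index)
    also have "\<dots> = A $$ (i', j') - (\<Sum>l<k. A $$ (l, j')) / k"
      using that by (simp add: left_diff_distrib sum_subtractf sum_divide_distrib sum_indicator_left)
    finally show ?thesis .
  qed
  have JAc: "Jmat k * A \<in> carrier_mat k k" by (rule mult_carrier_mat[OF Jmat_carrier A])
  have "(Jmat k * A * Jmat k) $$ (i, j) = (\<Sum>l<k. (Jmat k * A) $$ (i, l) * ((if l = j then 1 else 0) - 1 / k))"
    using i j by (simp add: index_mult_sum[OF JAc Jmat_carrier] Jmat_index)
  also have "\<dots> = (Jmat k * A) $$ (i, j) - (\<Sum>l<k. (Jmat k * A) $$ (i, l)) / k"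
    using j by (simp add: right_diff_distrib sum_subtractf sum_divide_distrib sum_indicator_right)
  also have "(\<Sum>l<k. (Jmat k * A) $$ (i, l)) = (\<Sum>l<k. A $$ (i, l)) - (\<Sum>l<k. \<Sum>l'<k. A $$ (l', l)) / k"
    using i by (simp add: JA sum_subtractf sum_divide_distrib)
  also have "(\<Sum>l<k. \<Sum>l'<k. A $$ (l', l)) = (\<Sum>l<k. \<Sum>l'<k. A $$ (l, l'))" by (rule sum.swap)
  also have "(Jmat k * A) $$ (i, j) - ((\<Sum>l<k. A $$ (i, l)) - (\<Sum>l<k. \<Sum>l'<k. A $$ (l, l')) / k) / k
     = A $$ (i, j) - (\<Sum>l<k. A $$ (l, j)) / k - (\<Sum>l<k. A $$ (i, l)) / k
      + (\<Sum>l<k. \<Sum>l'<k. A $$ (l, l')) / (k * k)"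
    using i j by (simp add: JA diff_divide_distrib)
  finally show ?thesis .
qed

definition lead_Kmap :: "nat \<Rightarrow> real mat \<Rightarrow> real mat" where
  "lead_Kmap k X = mat k k (\<lambda>(i, j). X $$ (i, i) + X $$ (j, j) - 2 * X $$ (i, j))"

lemma lead_center_eq_Kdag_lead_Kmap: "lead_center k X = Kdag k (lead_Kmap k X)"
proof -
  let ?A = "lead_Kmap k X"
  have Ac: "?A \<in> carrier_mat k k" unfolding lead_Kmap_def by simp
  have JAJc: "Jmat k * ?A * Jmat k \<in> carrier_mat k k"
    by (rule mult_carrier_mat[OF mult_carrier_mat[OF Jmat_carrier Ac] Jmat_carrier])
  show ?thesis
  proof (rule eq_matI)
    fix i j assume "i < dim_row (Kdag k ?A)" "j < dim_col (Kdag k ?A)"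
    then have i: "i < k" and j: "j < k" using JAJc unfolding Kdag_def by auto
    then have kpos: "0 < real k" by simp
    define tX where "tX = (\<Sum>l<k. X $$ (l, l))"
    define C where "C = (\<Sum>l<k. X $$ (l, j))"
    define R where "R = (\<Sum>l<k. X $$ (i, l))"
    define T where "T = (\<Sum>l<k. \<Sum>l'<k. X $$ (l, l'))"
    have s1: "(\<Sum>l<k. ?A $$ (l, j)) = tX + k * X $$ (j, j) - 2 * C"
      using j unfolding tX_def C_def lead_Kmap_def by (simp add: sum.distrib sum_subtractf sum_distrib_left)
    have s2: "(\<Sum>l<k. ?A $$ (i, l)) = k * X $$ (i, i) + tX - 2 * R"
      using i unfolding tX_def R_def lead_Kmap_def by (simp add: sum.distrib sum_subtractf sum_distrib_left)
    have s3: "(\<Sum>l<k. \<Sum>l'<k. ?A $$ (l, l')) = k * tX + k * tX - 2 * T"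
      unfolding tX_def T_def lead_Kmap_def by (simp add: sum.distrib sum_subtractf sum_distrib_left)
    have "Kdag k ?A $$ (i, j) = - 1 / 2 * (Jmat k * ?A * Jmat k) $$ (i, j)"
      unfolding Kdag_def by (rule index_smult_mat(1)) (use JAJc i j in auto)
    also have "\<dots> = - 1 / 2 * ((X $$ (i, i) + X $$ (j, j) - 2 * X $$ (i, j)) - (tX + k * X $$ (j, j) - 2 * C) / k
        - (k * X $$ (i, i) + tX - 2 * R) / k + (k * tX + k * tX - 2 * T) / (k * k))"
      unfolding Jmat_conj_index[OF Ac i j] s1 s2 s3 using i j by (simp add: lead_Kmap_def)
    also have "\<dots> = X $$ (i, j) - C / k - R / k + T / (k * k)"
      using kpos by (simp add: field_simps)
    also have "\<dots> = lead_center k X $$ (i, j)" unfolding C_def R_def T_def lead_center_index[OF i j] by simp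
    finally show "lead_center k X $$ (i, j) = Kdag k ?A $$ (i, j)" by simp
  qed (use JAJc in \<open>auto simp: Kdag_def lead_center_def\<close>)
qed

lemma d_alpha_eq_lead_Kmap:
  assumes Xc: "X \<in> carrier_mat n n" and Xs: "\<forall>i<n. \<forall>j<n. X $$ (j, i) = X $$ (i, j)"
    and kn: "k \<le> n" and Kd: "\<forall>i j. i < j \<and> j < k \<longrightarrow> Kmap X $$ (i, j) = d (i, j)"
  shows "d_alpha k d = lead_Kmap k X"
proof (rule eq_matI)
  fix i j assume "i < dim_row (lead_Kmap k X)" "j < dim_col (lead_Kmap k X)"
  then have i: "i < k" "i < n" and j: "j < k" "j < n" using kn by (auto simp: lead_Kmap_def)
  consider "i < j" | "j < i" | "i = j" by linarith
  then show "d_alpha k d $$ (i, j) = lead_Kmap k X $$ (i, j)"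
  proof cases
    case 1
    then have "d (i, j) = X $$ (i, i) + X $$ (j, j) - 2 * X $$ (i, j)"
      using Kd[rule_format, of i j] i j Kmap_index[OF Xc, of i j] by auto
    then show ?thesis using 1 i j unfolding d_alpha_def lead_Kmap_def by auto
  next
    case 2
    then have "d (j, i) = X $$ (i, i) + X $$ (j, j) - 2 * X $$ (i, j)"
      using Kd[rule_format, of j i] i j Kmap_index[OF Xc, of j i] Xs by auto
    then show ?thesis using 2 i j unfolding d_alpha_def lead_Kmap_def by auto
  qed (use i in \<open>auto simp: d_alpha_def lead_Kmap_def\<close>)
qed (auto simp: d_alpha_def lead_Kmap_def)

lemma lead_center_eq_Kdag:
  assumes "X \<in> carrier_mat n n" "\<forall>i<n. \<forall>j<n. X $$ (j, i) = X $$ (i, j)"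
    and "k \<le> n" "\<forall>i j. i < j \<and> j < k \<longrightarrow> Kmap X $$ (i, j) = d (i, j)"
  shows "lead_center k X = Kdag k (d_alpha k d)"
  using lead_center_eq_Kdag_lead_Kmap d_alpha_eq_lead_Kmap[OF assms] by simp

section \<open>The tail Gram matrix\<close>

text \<open>M = sum over l >= k of g_l g_l^T, where g_l = P_l J_n is the centred l-th coordinate.
  Its quadratic form is the squared centred mass outside alpha; it lies in S^n_{c,+} and is
  invisible to K on the clique.\<close>
definition tail_row :: "nat \<Rightarrow> nat \<Rightarrow> nat \<Rightarrow> nat \<Rightarrow> real" where
  "tail_row n k l i = (if k \<le> l then 1 else 0) * ((if l = i then 1 else 0) - 1 / n)"

definition tail_gram :: "nat \<Rightarrow> nat \<Rightarrow> real mat" where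
  "tail_gram n k = mat n n (\<lambda>(i, j). \<Sum>l<n. tail_row n k l i * tail_row n k l j)"

lemma sum_mult_tail_row: "l < n \<Longrightarrow> (\<Sum>i<n. x i * tail_row n k l i) = (if k \<le> l then 1 else 0) * (x l - (\<Sum>i<n. x i) / n)"
proof -
  assume l: "l < n"
  have "(\<Sum>i<n. x i * tail_row n k l i) = (if k \<le> l then 1 else 0) * ((\<Sum>i<n. x i * (if l = i then 1 else 0)) - (\<Sum>i<n. x i) / n)"
    unfolding tail_row_def by (simp add: sum_distrib_left sum_subtractf sum_divide_distrib algebra_simps)
  also have "(\<Sum>i<n. x i * (if l = i then 1 else 0)) = x l"
    using sum_indicator_right[OF l, of x] by (simp add: eq_commute)
  finally show ?thesis .
qed

lemma sum_tail_row_entries: "l < n \<Longrightarrow> (\<Sum>j<n. tail_row n k l j) = 0"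
  using sum_mult_tail_row[of l n "\<lambda>_. 1" k] by simp

lemma tail_gram_carrier: "tail_gram n k \<in> carrier_mat n n" unfolding tail_gram_def by simp

lemma quad_form_tail_gram: "quad_form n (tail_gram n k) x = (\<Sum>l<n. ((if k \<le> l then 1 else 0) * (x l - (\<Sum>i<n. x i) / n))^2)"
proof -
  have "quad_form n (tail_gram n k) x = (\<Sum>i<n. \<Sum>j<n. \<Sum>l<n. (x i * tail_row n k l i) * (x j * tail_row n k l j))"
    unfolding quad_form_def tail_gram_def by (intro sum.cong refl) (simp add: sum_distrib_left sum_distrib_right algebra_simps)
  also have "\<dots> = (\<Sum>i<n. \<Sum>l<n. \<Sum>j<n. (x i * tail_row n k l i) * (x j * tail_row n k l j))"
    by (rule sum.cong[OF refl], rule sum.swap)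
  also have "\<dots> = (\<Sum>l<n. \<Sum>i<n. \<Sum>j<n. (x i * tail_row n k l i) * (x j * tail_row n k l j))"
    by (rule sum.swap)
  also have "\<dots> = (\<Sum>l<n. (\<Sum>i<n. x i * tail_row n k l i) * (\<Sum>j<n. x j * tail_row n k l j))"
    by (simp add: sum_product)
  also have "\<dots> = (\<Sum>l<n. ((if k \<le> l then 1 else 0) * (x l - (\<Sum>i<n. x i) / n))^2)"
    by (intro sum.cong refl) (simp add: sum_mult_tail_row power2_eq_square)
  finally show ?thesis .
qed

lemma tail_gram_centered_psd: "tail_gram n k \<in> centered_psd n"
  unfolding centered_psd_iff
proof (intro conjI allI impI tail_gram_carrier)
  fix i j assume "i < n" "j < n"
  then show "tail_gram n k $$ (j, i) = tail_gram n k $$ (i, j)" unfolding tail_gram_def by (simp add: mult.commute)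
next
  fix f show "0 \<le> quad_form n (tail_gram n k) f" unfolding quad_form_tail_gram by (intro sum_nonneg) auto
next
  fix i assume i: "i < n"
  have "(\<Sum>j<n. tail_gram n k $$ (i, j)) = (\<Sum>j<n. \<Sum>l<n. tail_row n k l i * tail_row n k l j)"
    unfolding tail_gram_def using i by simp
  also have "\<dots> = (\<Sum>l<n. tail_row n k l i * (\<Sum>j<n. tail_row n k l j))"
    by (subst sum.swap) (simp add: sum_distrib_left)
  also have "\<dots> = 0" by (simp add: sum_tail_row_entries)
  finally show "(\<Sum>j<n. tail_gram n k $$ (i, j)) = 0" .
qed

lemma Kmap_tail_gram: "k \<le> n \<Longrightarrow> i < k \<Longrightarrow> j < k \<Longrightarrow> Kmap (tail_gram n k) $$ (i, j) = 0"
proof -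
  assume kn: "k \<le> n" and i: "i < k" and j: "j < k"
  have g: "tail_row n k l a = - (if k \<le> l then 1 else 0) / n" if "a < k" for l a
    using that unfolding tail_row_def by auto
  have e: "tail_gram n k $$ (a, b) = (\<Sum>l<n. ((if k \<le> l then 1 else 0) / n)^2)" if "a < k" "b < k" for a b
    unfolding tail_gram_def using that kn by (simp add: g power2_eq_square)
  have "Kmap (tail_gram n k) $$ (i, j) = tail_gram n k $$ (i, i) + tail_gram n k $$ (j, j) - 2 * tail_gram n k $$ (i, j)"
    using Kmap_index[OF tail_gram_carrier[of n k], of i j] i j kn by simp
  then show ?thesis using i j e[of i i] e[of j j] e[of i j] by simp
qed

section \<open>Domination estimate\<close>

lemma quad_form_parallelogram: "quad_form n A (\<lambda>i. f i + g i) + quad_form n A (\<lambda>i. f i - g i) = 2 * quad_form n A f + 2 * quad_form n A g"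
proof -
  have "quad_form n A (\<lambda>i. f i + g i) + quad_form n A (\<lambda>i. f i - g i)
     = (\<Sum>i<n. \<Sum>j<n. (f i + g i) * A $$ (i, j) * (f j + g j) + (f i - g i) * A $$ (i, j) * (f j - g j))"
    unfolding quad_form_def by (simp add: sum.distrib)
  also have "\<dots> = (\<Sum>i<n. \<Sum>j<n. 2 * (f i * A $$ (i, j) * f j) + 2 * (g i * A $$ (i, j) * g j))"
    by (intro sum.cong refl) (simp add: algebra_simps)
  also have "\<dots> = 2 * quad_form n A f + 2 * quad_form n A g"
    unfolding quad_form_def by (simp add: sum.distrib sum_distrib_left)
  finally show ?thesis .
qed

lemma quad_form_sum_le: "\<forall>h. 0 \<le> quad_form n A h \<Longrightarrow> quad_form n A (\<lambda>i. f i + g i) \<le> 2 * quad_form n A f + 2 * quad_form n A g"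
  using quad_form_parallelogram[of n A f g] by (metis le_add_same_cancel1)

lemma quad_form_uminus: "quad_form n A (\<lambda>i. - f i) = quad_form n A f"
  unfolding quad_form_def by simp

lemma quad_form_shift:
  assumes A: "A \<in> centered_psd n"
  shows "quad_form n A (\<lambda>i. f i + t) = quad_form n A f"
proof -
  have As: "\<forall>i<n. \<forall>j<n. A $$ (j, i) = A $$ (i, j)" and Ar: "\<forall>i<n. (\<Sum>j<n. A $$ (i, j)) = 0"
    using A centered_psd_iff by auto
  have Ac: "(\<Sum>i<n. A $$ (i, j)) = 0" if "j < n" for j
  proof -
    have "(\<Sum>i<n. A $$ (i, j)) = (\<Sum>i<n. A $$ (j, i))" using As that by (intro sum.cong refl) auto
    then show ?thesis using Ar that by simp
  qed
  have "quad_form n A (\<lambda>i. f i + t) = (\<Sum>i<n. \<Sum>j<n. f i * A $$ (i, j) * f j + t * (A $$ (i, j) * f j)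
       + t * f i * A $$ (i, j) + t * t * A $$ (i, j))"
    unfolding quad_form_def by (intro sum.cong refl) (simp add: algebra_simps)
  also have "\<dots> = quad_form n A f + t * (\<Sum>i<n. \<Sum>j<n. A $$ (i, j) * f j) + t * (\<Sum>i<n. f i * (\<Sum>j<n. A $$ (i, j)))
       + t * t * (\<Sum>i<n. (\<Sum>j<n. A $$ (i, j)))"
    unfolding quad_form_def by (simp add: sum.distrib sum_distrib_left algebra_simps)
  also have "(\<Sum>i<n. \<Sum>j<n. A $$ (i, j) * f j) = (\<Sum>j<n. (\<Sum>i<n. A $$ (i, j)) * f j)"
    by (subst sum.swap) (simp add: sum_distrib_right)
  also have "\<dots> = 0" using Ac by simp
  also have "(\<Sum>i<n. f i * (\<Sum>j<n. A $$ (i, j))) = 0" using Ar by simp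
  also have "(\<Sum>i<n. (\<Sum>j<n. A $$ (i, j))) = 0" using Ar by simp
  finally show ?thesis by simp
qed

definition entry_abs_sum :: "nat \<Rightarrow> real mat \<Rightarrow> real" where
  "entry_abs_sum n A = (\<Sum>i<n. \<Sum>j<n. \<bar>A $$ (i, j)\<bar>)"

lemma quad_form_le_abs_sum: "quad_form n A f \<le> entry_abs_sum n A * (\<Sum>l<n. (f l)^2)"
proof -
  let ?R = "\<Sum>l<n. (f l)^2"
  have fi: "(f i)^2 \<le> ?R" if "i < n" for i
    using that by (intro member_le_sum) auto
  have "f i * A $$ (i, j) * f j \<le> \<bar>A $$ (i, j)\<bar> * ?R" if "i < n" "j < n" for i j
  proof -
    have "\<bar>f i * f j\<bar> \<le> ((f i)^2 + (f j)^2) / 2"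
      using sum_squares_bound[of "\<bar>f i\<bar>" "\<bar>f j\<bar>"] by (simp add: abs_mult)
    then have "\<bar>f i * f j\<bar> \<le> ?R" using fi[OF that(1)] fi[OF that(2)] by (simp add: field_simps)
    then have "\<bar>A $$ (i, j)\<bar> * \<bar>f i * f j\<bar> \<le> \<bar>A $$ (i, j)\<bar> * ?R" by (intro mult_left_mono) auto
    moreover have "f i * A $$ (i, j) * f j \<le> \<bar>A $$ (i, j)\<bar> * \<bar>f i * f j\<bar>"
      by (metis abs_ge_self abs_mult mult.commute mult.left_commute)
    ultimately show ?thesis by linarith
  qed
  then have "quad_form n A f \<le> (\<Sum>i<n. \<Sum>j<n. \<bar>A $$ (i, j)\<bar> * ?R)"
    unfolding quad_form_def by (intro sum_mono) auto
  also have "\<dots> = entry_abs_sum n A * ?R" by (simp add: entry_abs_sum_def sum_distrib_right)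
  finally show ?thesis .
qed

lemma sum_lessThan_split: "k \<le> (n::nat) \<Longrightarrow> (\<Sum>l<n. g l) = (\<Sum>l<k. g l) + (\<Sum>l=k..<n. g l)"
  using sum.atLeastLessThan_concat[of 0 k n g] by (simp add: atLeast0LessThan)

lemma lead_mean_square_le:
  fixes y :: "nat \<Rightarrow> real"
  assumes kn: "k \<le> n" and y0: "(\<Sum>l<n. y l) = 0"
  shows "(\<Sum>l<n. (if l < k then (\<Sum>j<k. y j) / k else y l)^2)
     \<le> (real n + 1) * (\<Sum>l<n. ((if k \<le> l then 1 else 0) * y l)^2)"
proof -
  define s where "s = (\<Sum>l<k. y l) / k"
  define B where "B = (\<Sum>l=k..<n. (y l)^2)"
  have B0: "0 \<le> B" unfolding B_def by (intro sum_nonneg) auto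
  have R: "(\<Sum>l<n. (if l < k then (\<Sum>j<k. y j) / k else y l)^2) = k * s^2 + B"
    unfolding sum_lessThan_split[OF kn] s_def B_def by simp
  have Bq: "(\<Sum>l<n. ((if k \<le> l then 1 else 0) * y l)^2) = B"
    unfolding sum_lessThan_split[OF kn] B_def by simp
  have sy: "(\<Sum>l<k. y l) = - (\<Sum>l=k..<n. y l)" using y0 sum_lessThan_split[OF kn, of y] by simp
  have ks: "k * s^2 \<le> n * B"
  proof (cases "k = 0")
    case True then show ?thesis using B0 by simp
  next
    case False
    then have k1: "1 \<le> real k" by simp
    have "k * s^2 = (\<Sum>l<k. y l)^2 / k" unfolding s_def using False by (simp add: power2_eq_square)
    also have "\<dots> \<le> (\<Sum>l<k. y l)^2"
    proof -
      have "(\<Sum>l<k. y l)^2 * 1 \<le> (\<Sum>l<k. y l)^2 * k" using k1 by (intro mult_left_mono) auto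
      moreover have "0 < real k" using k1 by simp
      ultimately show ?thesis by (simp add: pos_divide_le_eq)
    qed
    also have "\<dots> = (\<Sum>l=k..<n. y l)^2" unfolding sy by simp
    also have "\<dots> \<le> B * real (card {k..<n})" unfolding B_def by (rule sum_squared_le_sum_of_squares)
    also have "\<dots> \<le> B * n" using B0 by (intro mult_left_mono) auto
    also have "\<dots> = n * B" by simp
    finally show ?thesis .
  qed
  show ?thesis unfolding R Bq using ks by (simp add: algebra_simps)
qed

lemma center_pad_remainder:
  fixes x :: "nat \<Rightarrow> real"
  assumes kn: "k \<le> n"
  defines "y \<equiv> \<lambda>i. x i - (\<Sum>j<n. x j) / n"
  obtains r where "y = (\<lambda>i. center_pad k y i + r i)"
    and "(\<Sum>l<n. (r l)^2) \<le> (real n + 1) * quad_form n (tail_gram n k) x"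
proof -
  define r where "r = (\<lambda>l. if l < k then (\<Sum>j<k. y j) / k else y l)"
  have "y = (\<lambda>i. center_pad k y i + r i)" by (auto simp: r_def center_pad_def)
  moreover have "(\<Sum>l<n. y l) = 0"
    by (cases "n = 0") (simp_all add: y_def sum_subtractf)
  then have "(\<Sum>l<n. (r l)^2) \<le> (real n + 1) * (\<Sum>l<n. ((if k \<le> l then 1 else 0) * y l)^2)"
    unfolding r_def by (rule lead_mean_square_le[OF kn])
  then have "(\<Sum>l<n. (r l)^2) \<le> (real n + 1) * quad_form n (tail_gram n k) x"
    unfolding quad_form_tail_gram y_def .
  ultimately show ?thesis using that by blast
qed

lemma quad_form_center_pad_compare:
  fixes x :: "nat \<Rightarrow> real"
  assumes A: "A \<in> centered_psd n" and kn: "k \<le> n"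
  defines "p \<equiv> center_pad k (\<lambda>i. x i - (\<Sum>j<n. x j) / n)"
    and "T \<equiv> 2 * (real n + 1) * entry_abs_sum n A * quad_form n (tail_gram n k) x"
  shows "quad_form n A x \<le> 2 * quad_form n A p + T"
    and "quad_form n A p \<le> 2 * quad_form n A x + T"
proof -
  define y where "y = (\<lambda>i. x i - (\<Sum>j<n. x j) / n)"
  obtain r where yr: "y = (\<lambda>i. p i + r i)" and R: "(\<Sum>l<n. (r l)^2) \<le> (real n + 1) * quad_form n (tail_gram n k) x"
    using center_pad_remainder[OF kn, of x] unfolding p_def y_def by blast
  have Ap: "\<forall>f. 0 \<le> quad_form n A f" using A centered_psd_iff by auto
  have xy: "quad_form n A x = quad_form n A y"
    using quad_form_shift[OF A, of y "(\<Sum>j<n. x j) / n"] unfolding y_def by simp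
  have "entry_abs_sum n A * (\<Sum>l<n. (r l)^2) \<le> entry_abs_sum n A * ((real n + 1) * quad_form n (tail_gram n k) x)"
    using R by (intro mult_left_mono) (auto simp: entry_abs_sum_def intro!: sum_nonneg)
  then have rT: "2 * quad_form n A r \<le> T"
    using quad_form_le_abs_sum[of n A r] unfolding T_def by (simp add: algebra_simps)
  show "quad_form n A x \<le> 2 * quad_form n A p + T"
    using quad_form_sum_le[OF Ap, of p r] xy yr rT by simp
  have "p = (\<lambda>i. y i + - r i)" using yr by auto
  then show "quad_form n A p \<le> 2 * quad_form n A x + T"
    using quad_form_sum_le[OF Ap, of y "\<lambda>i. - r i"] quad_form_uminus[of n A r] xy rT by simp
qed

lemma dominated_by_tail:
  assumes X: "X \<in> centered_psd n" and Z: "Z0 \<in> centered_psd n" and kn: "k \<le> n"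
    and lead: "dominated k (lead_center k X) (lead_center k Z0)"
  shows "dominated n X (Z0 + tail_gram n k)"
proof -
  obtain c where c: "0 \<le> c"
    and h: "\<forall>w. quad_form n X (center_pad k w) \<le> c * quad_form n Z0 (center_pad k w)"
    using lead quad_form_lead_center[OF kn] unfolding dominated_def by metis
  define NX where "NX = 2 * (real n + 1) * entry_abs_sum n X"
  define N0 where "N0 = 2 * (real n + 1) * entry_abs_sum n Z0"
  have "0 \<le> entry_abs_sum n A" for A by (simp add: entry_abs_sum_def sum_nonneg)
  then have N: "0 \<le> NX" "0 \<le> N0" unfolding NX_def N0_def by simp_all
  define K where "K = 4 * c + 2 * c * N0 + NX"
  have "quad_form n X x \<le> K * quad_form n (Z0 + tail_gram n k) x" for x
  proof -
    define p where "p = center_pad k (\<lambda>i. x i - (\<Sum>j<n. x j) / n)"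
    define T where "T = quad_form n (tail_gram n k) x"
    have T: "0 \<le> T" and QZ: "0 \<le> quad_form n Z0 x"
      using tail_gram_centered_psd Z centered_psd_iff unfolding T_def by auto
    have "quad_form n X x \<le> 2 * quad_form n X p + NX * T"
      using quad_form_center_pad_compare(1)[OF X kn, of x] unfolding p_def T_def NX_def by simp
    also have "\<dots> \<le> 2 * (c * quad_form n Z0 p) + NX * T"
      using h unfolding p_def by (simp add: mult_left_mono)
    also have "\<dots> \<le> 2 * (c * (2 * quad_form n Z0 x + N0 * T)) + NX * T"
      using quad_form_center_pad_compare(2)[OF Z kn, of x] c unfolding p_def T_def N0_def
      by (intro add_right_mono mult_left_mono) auto
    also have "\<dots> \<le> K * (quad_form n Z0 x + T)"
      using c N T QZ unfolding K_def by (simp add: algebra_simps mult_right_mono)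
    finally show ?thesis
      unfolding T_def quad_form_add[OF centered_psd_carrier[OF Z] tail_gram_carrier] .
  qed
  moreover have "0 \<le> K" using c N unfolding K_def by simp
  ultimately show ?thesis unfolding dominated_def by blast
qed

section \<open>The face generated by the clique constraints\<close>

lemma face_hull_eq_zero_pad_exposed:
  assumes kn: "k \<le> n" and Y: "Y \<in> centered_psd k"
    and Y_exp: "face_hull (centered_psd k) {D} = {A \<in> centered_psd k. tr_inner A Y = 0}"
    and Om: "\<Omega> \<subseteq> centered_psd n" and lead: "\<And>X. X \<in> \<Omega> \<Longrightarrow> lead_center k X = D"
    and Z0: "Z0 \<in> \<Omega>" and Z0_tail: "Z0 + tail_gram n k \<in> \<Omega>"
  shows "face_hull (centered_psd n) \<Omega> = {X \<in> centered_psd n. tr_inner X (zero_pad k n Y) = 0}"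
    (is "_ = ?FY")
proof -
  have Yc: "Y \<in> carrier_mat k k" and Ys: "\<forall>i<k. \<forall>j<k. Y $$ (j, i) = Y $$ (i, j)"
    and Yr: "\<forall>i<k. (\<Sum>j<k. Y $$ (i, j)) = 0" using Y centered_psd_iff by auto
  have tr_pad: "tr_inner X (zero_pad k n Y) = tr_inner (lead_center k X) Y" if "X \<in> centered_psd n" for X
    using tr_inner_zero_pad[OF Yc kn centered_psd_carrier[OF that] Ys Yr] .
  have Z0S: "Z0 \<in> centered_psd n" using Z0 Om by blast
  have D: "D \<in> centered_psd k" using lead_center_centered_psd[OF Z0S kn] lead[OF Z0] by simp
  have hull: "is_face (centered_psd k) (face_hull (centered_psd k) {D})" "D \<in> face_hull (centered_psd k) {D}"
    using face_hull_is_face[OF convex_centered_psd, of "{D}"] D by auto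
  have "0 \<le> tr_inner A Y" if "A \<in> centered_psd k" for A
    using tr_inner_nonneg_if_face[OF Y _ that] hull(1) Y_exp by simp
  then have "is_face (centered_psd n) ?FY"
    using exposed_set_is_face[OF zero_pad_carrier[OF Yc kn]] tr_pad lead_center_centered_psd kn by metis
  moreover have "\<Omega> \<subseteq> ?FY" using Om lead tr_pad hull(2) Y_exp by auto
  ultimately have hull_FY: "face_hull (centered_psd n) \<Omega> \<subseteq> ?FY" by (rule face_hull_least)
  have "X \<in> face_hull (centered_psd n) \<Omega>" if X: "X \<in> ?FY" for X
  proof -
    have XS: "X \<in> centered_psd n" using X by blast
    have "lead_center k X \<in> face_hull (centered_psd k) {D}"
      using X Y_exp tr_pad[OF XS] lead_center_centered_psd[OF XS kn] by simp
    then have "dominated k (lead_center k X) (lead_center k Z0)"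
      using face_hull_dominated[OF D] lead[OF Z0] by simp
    then have dom: "dominated n X (Z0 + tail_gram n k)" by (rule dominated_by_tail[OF XS Z0S kn])
    show ?thesis unfolding face_hull_def
      using face_dominated[OF _ _ XS dom] Z0_tail by blast
  qed
  then show ?thesis using hull_FY by blast
qed

theorem theorem3p1:
  fixes n k :: nat and E :: "(nat \<times> nat) set" and d :: "nat \<times> nat \<Rightarrow> real"
    and Yhat :: "real mat"
  assumes E_sub: "E \<subseteq> {(i, j). i < j \<and> j < n}"
    and d_nonneg: "\<forall>e\<in>E. 0 \<le> d e"
    and k_le: "k \<le> n"
    and clique: "\<forall>i j. i < j \<and> j < k \<longrightarrow> (i, j) \<in> E"
    and nonempty: "{X \<in> centered_psd n. \<forall>i j. i < j \<and> j < k \<longrightarrow> Kmap X $$ (i, j) = d (i, j)} \<noteq> {}"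
    and Yhat_sym: "Yhat \<in> sym_mats k"
    and Yhat_exp: "exposes k Yhat (face_hull (centered_psd k) {Kdag k (d_alpha k d)})"
  shows "exposes n (four_block_mat Yhat (0\<^sub>m k (n - k)) (0\<^sub>m (n - k) k) (0\<^sub>m (n - k) (n - k)))
           (face_hull (centered_psd n)
              {X \<in> centered_psd n. \<forall>i j. i < j \<and> j < k \<longrightarrow> Kmap X $$ (i, j) = d (i, j)})"
proof -
  define \<Omega> where "\<Omega> = {X \<in> centered_psd n. \<forall>i j. i < j \<and> j < k \<longrightarrow> Kmap X $$ (i, j) = d (i, j)}"
  have Y: "Yhat \<in> centered_psd k" and Y_hull: "face_hull (centered_psd k) {Kdag k (d_alpha k d)}
      = {A \<in> centered_psd k. tr_inner A Yhat = 0}"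
    using Yhat_exp Yhat_sym unfolding exposes_def centered_psd_def by auto
  obtain Z0 where Z0: "Z0 \<in> \<Omega>" using nonempty unfolding \<Omega>_def by blast
  have lead: "lead_center k X = Kdag k (d_alpha k d)" if "X \<in> \<Omega>" for X
    using that lead_center_eq_Kdag[of X n k d] k_le centered_psd_iff unfolding \<Omega>_def by auto
  have tail: "Z0 + tail_gram n k \<in> \<Omega>"
    using Z0 centered_psd_add[OF _ tail_gram_centered_psd] Kmap_add[OF _ tail_gram_carrier]
      Kmap_tail_gram[OF k_le] centered_psd_carrier k_le unfolding \<Omega>_def by auto
  have "face_hull (centered_psd n) \<Omega> = {X \<in> centered_psd n. tr_inner X (zero_pad k n Yhat) = 0}"
    by (rule face_hull_eq_zero_pad_exposed[OF k_le Y Y_hull _ lead Z0 tail]) (auto simp: \<Omega>_def)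
  moreover have "zero_pad k n Yhat \<in> centered_psd n" by (rule zero_pad_centered_psd[OF Y k_le])
  ultimately show ?thesis
    unfolding exposes_def \<Omega>_def[symmetric] zero_pad_def[symmetric]
    by (auto simp: centered_psd_def sym_mats_def)
qed

end
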